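(* Let $f(z)=\sum_{k\ge0}f_kz^k$ be holomorphic on the open unit disk, $0<r<1$, and let $N(n)$ be an increasing sequence of integers with $N(n)/n\to\infty$ such that for each $n$ there are $P_n\in\mathcal P_n$ and $Q_n\in\mathcal P_1$, $Q_n\neq0$, with $Q_nf-P_n$ having at least $N(n)$ zeros in $\overline\Delta_r$, normalized so that $Q_n(z)=\alpha_nz-1$ with $\alpha_n\in\mathbb C$ or $Q_n(z)=z$ (written $\alpha_n=\infty$). Let $\rho=1/\limsup_k|f_k|^{1/k}\ge1$ be the radius of convergence of the Taylor series of $f$ at $0$. Then $\limsup_{n\to\infty}|\alpha_n|\ge1/\rho$.
   Context: $\mathcal P_n$ is the space of complex polynomials of degree at most $n$; zeros are counted with multiplicity; $|\infty|=\infty$ and $1/\infty=0$. *)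

theory Defs
  imports "HOL-Complex_Analysis.Complex_Analysis" "HOL-Computational_Algebra.Polynomial"
begin

text \<open>g has at least m zeros in S, counted with multiplicity: there are finitely
  many distinct points z in S and multiplicities mult z such that g and its
  derivatives of order < mult z vanish at z, with total multiplicity at least m.\<close>
definition zeros_at_least :: "(complex \<Rightarrow> complex) \<Rightarrow> complex set \<Rightarrow> int \<Rightarrow> bool" where
  "zeros_at_least g S m \<longleftrightarrow>
     (\<exists>A mult. finite A \<and> A \<subseteq> S \<and>
        (\<forall>z\<in>A. \<forall>j<mult z. (deriv ^^ j) g z = 0) \<and> int (sum mult A) \<ge> m)"

text \<open>Normalized degree-one denominator: Some a gives a z - 1, None (alpha = infinity) gives z.\<close>
definition Qpoly :: "complex option \<Rightarrow> complex poly" where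
  "Qpoly a = (case a of Some c \<Rightarrow> [:-1, c:] | None \<Rightarrow> [:0, 1:])"

definition absalpha :: "complex option \<Rightarrow> ereal" where
  "absalpha a = (case a of Some c \<Rightarrow> ereal (norm c) | None \<Rightarrow> \<infinity>)"

definition taylor_coeff :: "(complex \<Rightarrow> complex) \<Rightarrow> nat \<Rightarrow> complex" where
  "taylor_coeff f k = (deriv ^^ k) f 0 / of_nat (fact k)"

end

theory Submission
  imports Defs
begin

text \<open>
  Suppose limsup |alpha_n| < a0 < a < 1/rho. For large n the function
  g_n = (alpha_n z - 1) f - P_n has at least N(n) zeros in the disc of radius r. Dividing them
  out by Blaschke factors of a disc of radius R in (r, 1) shows that on the small disc g_n is at
  most delta^N(n) times its maximum on |z| = R, for a fixed delta < 1. As P_n has degree n, its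
  maximum on |z| = R exceeds that on |z| = r by at most the factor (n + 1) (R/r)^n, so
  N(n)/n -> infinity makes g_n geometrically small on the small disc. The coefficient of z^(n+1)
  in g_n is alpha_n f_n - f_(n+1), and Cauchy's estimate yields
  |f_(n+1)| <= a0 |f_n| + (a - a0) a^n for large n. Hence f_n = O(a^n) and rho >= 1/a,
  a contradiction.
\<close>

section \<open>Taylor coefficients\<close>

lemma taylor_coeff_eq_fps_nth:
  assumes "f has_fps_expansion F"
  shows "taylor_coeff f k = fps_nth F k"
  using fps_nth_fps_expansion[OF assms] by (simp add: taylor_coeff_def)

lemma has_fps_expansion_poly: "poly p has_fps_expansion fps_of_poly p"
proof -
  have "eval_fps (fps_of_poly p) = poly p" by (rule ext) simp
  then show ?thesis using eval_fps_has_fps_expansion[of "fps_of_poly p"] by simp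
qed

lemma taylor_coeff_poly: "taylor_coeff (poly p) k = coeff p k"
  by (simp add: taylor_coeff_eq_fps_nth[OF has_fps_expansion_poly])

lemma taylor_coeff_Suc_linear_mult_minus_poly:
  assumes "f holomorphic_on U" "open U" "0 \<in> U" "degree p \<le> n"
  shows "taylor_coeff (\<lambda>z. poly [:-1, c:] z * f z - poly p z) (Suc n)
           = c * taylor_coeff f n - taylor_coeff f (Suc n)"
proof -
  define F where "F = fps_expansion f 0"
  have f: "f has_fps_expansion F"
    unfolding F_def using assms by blast
  then have "(\<lambda>z. poly [:-1, c:] z * f z - poly p z)
      has_fps_expansion fps_of_poly [:-1, c:] * F - fps_of_poly p"
    by (intro has_fps_expansion_diff has_fps_expansion_mult has_fps_expansion_poly)
  then have "taylor_coeff (\<lambda>z. poly [:-1, c:] z * f z - poly p z) (Suc n)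
      = fps_nth (fps_of_poly [:-1, c:] * F) (Suc n)"
    using assms(4) by (simp add: taylor_coeff_eq_fps_nth coeff_eq_0)
  also have "\<dots> = c * fps_nth F n - fps_nth F (Suc n)"
    by (simp add: fps_of_poly_pCons distrib_right mult.assoc fps_X_mult_nth)
  finally show ?thesis using f by (simp add: taylor_coeff_eq_fps_nth)
qed

lemma norm_taylor_coeff_le:
  assumes "g holomorphic_on ball 0 r" "continuous_on (cball 0 r) g" "0 < r"
    and "\<And>w. cmod w = r \<Longrightarrow> cmod (g w) \<le> B"
  shows "cmod (taylor_coeff g k) \<le> B / r ^ k"
proof -
  have "cmod ((deriv ^^ k) g 0) \<le> fact k * B / r ^ k"
    by (rule Cauchy_inequality) (use assms in auto)
  then show ?thesis
    by (simp add: taylor_coeff_def norm_divide divide_le_eq field_simps)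
qed

lemma norm_poly_le_of_circle_bound:
  fixes p :: "complex poly"
  assumes r: "0 < r" "r \<le> R" and deg: "degree p \<le> n"
    and bound: "\<And>w. cmod w = r \<Longrightarrow> cmod (poly p w) \<le> B" and z: "cmod z \<le> R"
  shows "cmod (poly p z) \<le> real (Suc n) * (R / r) ^ n * B"
proof -
  have coeff_le: "cmod (coeff p k) \<le> B / r ^ k" for k
    using norm_taylor_coeff_le[of "poly p" r B k] r bound
    by (simp add: taylor_coeff_poly continuous_intros holomorphic_intros)
  have B: "0 \<le> B"
    using r by (intro order_trans[OF norm_ge_zero bound[of "of_real r"]]) simp
  have "poly p z = (\<Sum>i\<le>n. coeff p i * z ^ i)"
    using deg by (auto simp: poly_altdef coeff_eq_0 le_degree intro!: sum.mono_neutral_left)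
  then have "cmod (poly p z) \<le> (\<Sum>i\<le>n. cmod (coeff p i) * cmod z ^ i)"
    by (simp add: norm_sum norm_mult norm_power sum_norm_le)
  also have "\<dots> \<le> (\<Sum>i\<le>n. (R / r) ^ n * B)"
  proof (rule sum_mono)
    fix i assume i: "i \<in> {..n}"
    have "cmod (coeff p i) * cmod z ^ i \<le> B / r ^ i * R ^ i"
      using coeff_le B z r by (intro mult_mono power_mono) auto
    also have "\<dots> = (R / r) ^ i * B"
      by (simp add: power_divide)
    also have "\<dots> \<le> (R / r) ^ n * B"
      using i r B by (intro mult_right_mono power_increasing) auto
    finally show "cmod (coeff p i) * cmod z ^ i \<le> (R / r) ^ n * B" .
  qed
  finally show ?thesis by simp
qed

section \<open>Zeros counted with multiplicity\<close>

lemma higher_deriv_mult_eq_0: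
  fixes g u :: "complex \<Rightarrow> complex"
  assumes "g holomorphic_on U" "u holomorphic_on U" "open U" "b \<in> U"
    and "\<forall>i<m. (deriv ^^ i) g b = 0" "j < m"
  shows "(deriv ^^ j) (\<lambda>w. g w * u w) b = 0"
  using assms by (subst higher_deriv_mult[OF assms(1-4)]) (auto intro!: sum.neutral)

lemma higher_deriv_Suc_linear_mult_at_root:
  fixes h :: "complex \<Rightarrow> complex"
  assumes "h holomorphic_on U" "open U" "a \<in> U"
  shows "(deriv ^^ Suc j) (\<lambda>w. (w - a) * h w) a = of_nat (Suc j) * (deriv ^^ j) h a"
proof -
  have lin: "(deriv ^^ i) (\<lambda>w. w - a) w = (if i = 0 then w - a else if i = 1 then 1 else 0)"
    for i w
  proof (cases i)
    case (Suc k)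
    have "deriv (\<lambda>w. w - a) = (\<lambda>w. 1)"
      by (rule ext, rule DERIV_imp_deriv) (auto intro!: derivative_eq_intros)
    then show ?thesis using Suc by (simp add: funpow_Suc_right del: funpow.simps)
  qed simp
  have "(deriv ^^ Suc j) (\<lambda>w. (w - a) * h w) a
      = (\<Sum>i = 0..Suc j. of_nat (Suc j choose i) * (deriv ^^ i) (\<lambda>w. w - a) a
                           * (deriv ^^ (Suc j - i)) h a)"
    by (rule higher_deriv_mult[OF _ assms]) (intro holomorphic_intros)
  also have "\<dots> = of_nat (Suc j) * (deriv ^^ j) h a"
    by (simp only: sum.atLeast0_atMost_Suc_shift lin)
      (simp add: mult_delta_right mult_delta_left sum.delta del: funpow.simps binomial_Suc_Suc)
  finally show ?thesis .
qed

lemma zeros_at_least_mult: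
  assumes "g holomorphic_on U" "u holomorphic_on U" "open U" "S \<subseteq> U"
    and "zeros_at_least g S m"
  shows "zeros_at_least (\<lambda>w. g w * u w) S m"
proof -
  obtain A \<mu> where A: "finite A" "A \<subseteq> S" "m \<le> int (sum \<mu> A)"
    and vanish: "\<forall>z\<in>A. \<forall>j<\<mu> z. (deriv ^^ j) g z = 0"
    using assms(5) unfolding zeros_at_least_def by blast
  have "(deriv ^^ j) (\<lambda>w. g w * u w) z = 0" if "z \<in> A" "j < \<mu> z" for z j
    by (rule higher_deriv_mult_eq_0[OF assms(1-3)]) (use A vanish that assms(4) in auto)
  then show ?thesis
    unfolding zeros_at_least_def using A by (intro exI[of _ A] exI[of _ \<mu>]) auto
qed

lemma zeros_at_least_factor_root:
  assumes g: "g holomorphic_on U" "open U" "S \<subseteq> U"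
    and zeros: "zeros_at_least g S (int (Suc m))"
  obtains a h where "a \<in> S" "h holomorphic_on U" "g = (\<lambda>w. (w - a) * h w)"
    "zeros_at_least h S (int m)"
proof -
  obtain A \<mu> where A: "finite A" "A \<subseteq> S"
    and vanish: "\<forall>z\<in>A. \<forall>j<\<mu> z. (deriv ^^ j) g z = 0" and sum: "Suc m \<le> sum \<mu> A"
    using zeros unfolding zeros_at_least_def of_nat_le_iff by blast
  have "sum \<mu> A \<noteq> 0" using sum by linarith
  then obtain a where a: "a \<in> A" "\<mu> a \<noteq> 0"
    by (rule sum.not_neutral_contains_not_neutral)
  have aU: "a \<in> U" using a A g by auto
  define h where "h = (\<lambda>z. if z = a then deriv g a else (g z - g a) / (z - a))"
  have h: "h holomorphic_on U"
    unfolding h_def using g aU by (intro pole_lemma) (auto simp: interior_open)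
  have "(deriv ^^ 0) g a = 0" using vanish a by blast
  then have "g a = 0" by simp
  then have g_eq: "g = (\<lambda>w. (w - a) * h w)"
    by (auto simp: h_def)
  define \<mu>' where "\<mu>' = \<mu>(a := \<mu> a - 1)"
  have vanish': "(deriv ^^ j) h b = 0" if b: "b \<in> A" and j: "j < \<mu>' b" for b j
  proof (cases "b = a")
    case True
    have "of_nat (Suc j) * (deriv ^^ j) h a = (deriv ^^ Suc j) g a"
      unfolding g_eq using higher_deriv_Suc_linear_mult_at_root[OF h g(2) aU] by simp
    also have "\<dots> = 0"
      using vanish a(1) j True unfolding \<mu>'_def by (simp del: funpow.simps)
    finally show ?thesis using True by (simp del: of_nat_Suc)
  next
    case False
    have bU: "b \<in> U - {a}" using b A g False by auto
    have "\<forall>\<^sub>F w in nhds b. h w = g w * inverse (w - a)"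
      using eventually_nhds_in_open[of "- {a}" b] False
      by (auto elim!: eventually_mono simp: g_eq open_Compl)
    then have "(deriv ^^ j) h b = (deriv ^^ j) (\<lambda>w. g w * inverse (w - a)) b"
      by (rule higher_deriv_cong_ev) simp
    also have "\<dots> = 0"
      using g h bU vanish b j False unfolding \<mu>'_def
      by (intro higher_deriv_mult_eq_0[of _ "U - {a}"]) (auto intro!: holomorphic_intros
          elim: holomorphic_on_subset)
    finally show ?thesis .
  qed
  have "sum \<mu>' (A - {a}) = sum \<mu> (A - {a})"
    unfolding \<mu>'_def by (intro sum.cong) auto
  then have "m \<le> sum \<mu>' A"
    using sum a sum.remove[OF A(1) a(1), of \<mu>] sum.remove[OF A(1) a(1), of \<mu>']
    unfolding \<mu>'_def by simp
  then have "zeros_at_least h S (int m)"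
    unfolding zeros_at_least_def using A vanish'
    by (intro exI[of _ A] exI[of _ \<mu>']) (auto simp flip: of_nat_sum)
  then show thesis using that a A h g_eq by blast
qed

section \<open>Blaschke factors\<close>

text \<open>
  The maximum of |R (z - a) / (R^2 - cnj a z)| over |a|, |z| <= r; up to a unimodular factor,
  this quotient is the Blaschke factor of the disc of radius R with zero a.
\<close>
definition blaschke_bound :: "real \<Rightarrow> real \<Rightarrow> real" where
  "blaschke_bound r R = 2 * r * R / (R\<^sup>2 + r\<^sup>2)"

lemma blaschke_bound_nonneg: "0 \<le> r \<Longrightarrow> 0 \<le> R \<Longrightarrow> 0 \<le> blaschke_bound r R"
  by (simp add: blaschke_bound_def)

lemma blaschke_bound_less_1:
  assumes "0 \<le> r" "r < R"
  shows "blaschke_bound r R < 1"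
proof -
  have "0 < (R - r)\<^sup>2" using assms by simp
  then have "2 * r * R < R\<^sup>2 + r\<^sup>2" by (simp add: power2_diff mult_ac)
  moreover have "0 < R\<^sup>2 + r\<^sup>2" using assms by (simp add: add_pos_nonneg)
  ultimately show ?thesis unfolding blaschke_bound_def by simp
qed

lemma norm_blaschke_denominator_sq:
  fixes a z :: complex
  shows "(cmod (of_real (R\<^sup>2) - cnj a * z))\<^sup>2
           = R\<^sup>2 * (cmod (z - a))\<^sup>2 + (R\<^sup>2 - (cmod a)\<^sup>2) * (R\<^sup>2 - (cmod z)\<^sup>2)"
  unfolding cmod_power2 by (simp add: power2_eq_square algebra_simps)

lemma norm_blaschke_denominator_circle:
  fixes a z :: complex
  assumes "cmod z = R" "0 \<le> R"
  shows "cmod (of_real (R\<^sup>2) - cnj a * z) = R * cmod (z - a)"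
proof -
  have "(cmod (of_real (R\<^sup>2) - cnj a * z))\<^sup>2 = (R * cmod (z - a))\<^sup>2"
    using norm_blaschke_denominator_sq[of R a z] assms by (simp add: power_mult_distrib)
  then show ?thesis using assms(2) by (simp add: power2_eq_iff_nonneg)
qed

lemma norm_blaschke_factor_le:
  fixes a z :: complex
  assumes r: "0 \<le> r" "r \<le> R" "0 < R" and a: "cmod a \<le> r" and z: "cmod z \<le> r"
  shows "R * cmod (z - a) \<le> blaschke_bound r R * cmod (of_real (R\<^sup>2) - cnj a * z)"
proof -
  define D where "D = cmod (of_real (R\<^sup>2) - cnj a * z)"
  define X where "X = (R\<^sup>2 - (cmod a)\<^sup>2) * (R\<^sup>2 - (cmod z)\<^sup>2)"
  define d where "d = R * cmod (z - a)"
  have "(R\<^sup>2 - r\<^sup>2)\<^sup>2 \<le> X"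
    unfolding X_def power2_eq_square[of "R\<^sup>2 - r\<^sup>2"] using r a z
    by (intro mult_mono) (auto intro!: power_mono)
  moreover have "d\<^sup>2 \<le> (2 * r * R)\<^sup>2"
    unfolding d_def using norm_triangle_ineq4[of z a] a z r
    by (intro power_mono) (auto simp: mult.commute)
  ultimately have "d\<^sup>2 * (R\<^sup>2 - r\<^sup>2)\<^sup>2 \<le> (2 * r * R)\<^sup>2 * X"
    by (intro mult_mono) auto
  then have "(d * (R\<^sup>2 + r\<^sup>2))\<^sup>2 \<le> (2 * r * R)\<^sup>2 * (X + d\<^sup>2)"
    by (simp add: power2_eq_square algebra_simps)
  also have "X + d\<^sup>2 = D\<^sup>2"
    unfolding D_def X_def d_def norm_blaschke_denominator_sq by (simp add: power_mult_distrib)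
  finally have "(d * (R\<^sup>2 + r\<^sup>2))\<^sup>2 \<le> (2 * r * R * D)\<^sup>2"
    by (simp only: power_mult_distrib[of "2 * r * R" D])
  then have "d * (R\<^sup>2 + r\<^sup>2) \<le> 2 * r * R * D"
    by (rule power2_le_imp_le) (use r in \<open>simp add: D_def\<close>)
  moreover have "0 < R\<^sup>2 + r\<^sup>2" using r by (simp add: add_pos_nonneg)
  ultimately have "d \<le> 2 * r * R * D / (R\<^sup>2 + r\<^sup>2)"
    by (simp add: le_divide_eq)
  then show ?thesis
    unfolding blaschke_bound_def D_def d_def by simp
qed

lemma norm_le_blaschke_bound_pow:
  fixes g :: "complex \<Rightarrow> complex"
  assumes r: "0 < r" "r < R" and U: "open U" "cball 0 R \<subseteq> U"
    and "g holomorphic_on U" "zeros_at_least g (cball 0 r) (int m)"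
    and "\<And>w. cmod w = R \<Longrightarrow> cmod (g w) \<le> M" and z: "cmod z \<le> r"
  shows "cmod (g z) \<le> blaschke_bound r R ^ m * M"
  using assms(5-7)
proof (induction m arbitrary: g)
  case 0
  have "cmod (g z) \<le> M"
  proof (rule maximum_modulus_frontier[of g "ball 0 R"])
    show "g holomorphic_on interior (ball 0 R)"
      using "0.prems"(1) U by (auto elim!: holomorphic_on_subset)
    show "continuous_on (closure (ball 0 R)) g"
      using "0.prems"(1) U r
      by (auto intro: holomorphic_on_imp_continuous_on elim!: holomorphic_on_subset)
  qed (use "0.prems"(3) r z in auto)
  then show ?case by simp
next
  case (Suc m)
  have rU: "cball 0 r \<subseteq> U" using r U by auto
  obtain a h where a: "a \<in> cball 0 r" and h: "h holomorphic_on U"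
    and g_eq: "g = (\<lambda>w. (w - a) * h w)" and zeros: "zeros_at_least h (cball 0 r) (int m)"
    using zeros_at_least_factor_root[OF Suc.prems(1) U(1) rU Suc.prems(2)] by blast
  define D where "D w = of_real (R\<^sup>2) - cnj a * w" for w
  define k where "k w = h w * (D w / of_real R)" for w
  have "k holomorphic_on U"
    unfolding k_def D_def using h by (intro holomorphic_intros) auto
  moreover have "zeros_at_least k (cball 0 r) (int m)"
    unfolding k_def using h U rU zeros
    by (intro zeros_at_least_mult[of _ U]) (auto simp: D_def intro!: holomorphic_intros)
  moreover have "cmod (k w) \<le> M" if w: "cmod w = R" for w
  proof -
    have "cmod (k w) = cmod (h w) * cmod (w - a)"
      using norm_blaschke_denominator_circle[OF w] r
      by (simp add: k_def D_def norm_mult norm_divide)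
    also have "\<dots> = cmod (g w)" by (simp add: g_eq norm_mult)
    finally show ?thesis using Suc.prems(3) w by simp
  qed
  ultimately have IH: "cmod (k z) \<le> blaschke_bound r R ^ m * M"
    by (rule Suc.IH)
  have "R * cmod (z - a) \<le> blaschke_bound r R * cmod (D z)"
    unfolding D_def using a z r by (intro norm_blaschke_factor_le) auto
  then have "cmod (z - a) \<le> blaschke_bound r R * (cmod (D z) / R)"
    using r by (simp add: field_simps)
  then have "cmod (z - a) * cmod (h z) \<le> blaschke_bound r R * (cmod (D z) / R) * cmod (h z)"
    by (rule mult_right_mono) simp
  then have "cmod (g z) \<le> blaschke_bound r R * cmod (k z)"
    using r by (simp add: g_eq k_def norm_mult norm_divide mult_ac)
  also have "\<dots> \<le> blaschke_bound r R * (blaschke_bound r R ^ m * M)"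
    using IH r by (intro mult_left_mono blaschke_bound_nonneg) auto
  finally show ?case by simp
qed

section \<open>Holomorphic functions close to a polynomial at many points\<close>

lemma absorb_self_bound:
  fixes E C t K :: real
  assumes E: "E \<le> t * (C + K * (C + E))"
    and tK: "t * K \<le> 1/2" "1 \<le> K" "0 \<le> t" and C: "0 \<le> C"
  shows "E \<le> 4 * (t * K) * C"
proof (cases "0 \<le> E")
  case True
  have "t * C \<le> (t * K) * C"
    using tK C by (intro mult_right_mono) (simp_all add: mult_le_cancel_left1)
  moreover have "(t * K) * E \<le> 1/2 * E"
    using tK True by (intro mult_right_mono) auto
  ultimately show ?thesis
    using E by (simp add: algebra_simps)
next
  case False
  have "0 \<le> 4 * (t * K) * C" using tK C by simp
  with False show ?thesis by linarith
qed

text \<open>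
  The maximum E of |F - p| on the small disc bounds p on |w| = r, hence on |w| = R; dividing
  out the zeros then bounds E by at most half of itself plus a multiple of C.
\<close>
lemma norm_diff_poly_le_of_zeros:
  fixes F :: "complex \<Rightarrow> complex" and p :: "complex poly"
  assumes r: "0 < r" "r < R" and U: "open U" "cball 0 R \<subseteq> U" and F: "F holomorphic_on U"
    and F_le: "\<And>w. cmod w \<le> R \<Longrightarrow> cmod (F w) \<le> C"
    and deg: "degree p \<le> n"
    and zeros: "zeros_at_least (\<lambda>w. F w - poly p w) (cball 0 r) (int m)"
    and small: "blaschke_bound r R ^ m * (real (Suc n) * (R / r) ^ n) \<le> 1/2"
    and z: "cmod z \<le> r"
  shows "cmod (F z - poly p z) \<le> 4 * (blaschke_bound r R ^ m * (real (Suc n) * (R / r) ^ n)) * C"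
proof -
  define g where "g = (\<lambda>w. F w - poly p w)"
  define t where "t = blaschke_bound r R ^ m"
  define K where "K = real (Suc n) * (R / r) ^ n"
  have g: "g holomorphic_on U"
    unfolding g_def using F by (intro holomorphic_intros)
  have "cball 0 r \<subseteq> U" using r U by auto
  then have "continuous_on (cball 0 r) g"
    using g by (auto intro: holomorphic_on_imp_continuous_on elim!: holomorphic_on_subset)
  then have "continuous_on (cball 0 r) (\<lambda>w. cmod (g w))"
    by (intro continuous_intros)
  then obtain z0 where z0: "z0 \<in> cball 0 r"
    and max: "\<And>w. w \<in> cball 0 r \<Longrightarrow> cmod (g w) \<le> cmod (g z0)"
    using continuous_attains_sup[of "cball 0 r" "\<lambda>w. cmod (g w)"] r by auto
  define E where "E = cmod (g z0)"
  have "cmod (poly p w) \<le> C + E" if "cmod w = r" for w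
    using norm_triangle_ineq4[of "F w" "g w"] F_le[of w] max[of w] that r
    by (simp add: g_def E_def)
  then have "cmod (poly p w) \<le> K * (C + E)" if "cmod w = R" for w
    unfolding K_def using r deg that by (intro norm_poly_le_of_circle_bound) auto
  then have "cmod (g w) \<le> C + K * (C + E)" if "cmod w = R" for w
    using norm_triangle_ineq4[of "F w" "poly p w"] F_le[of w] that
    by (fastforce simp: g_def)
  then have "E \<le> t * (C + K * (C + E))"
    unfolding E_def t_def using r U g zeros[folded g_def] z0
    by (intro norm_le_blaschke_bound_pow[of r R U g m]) auto
  moreover have "1 \<le> K"
    using mult_mono[of 1 "real (Suc n)" 1 "(R / r) ^ n"] r unfolding K_def by (simp add: one_le_power)
  moreover have "0 \<le> C"
    using r by (intro order_trans[OF norm_ge_zero F_le[of 0]]) simp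
  ultimately have "E \<le> 4 * (t * K) * C"
    using small r by (intro absorb_self_bound) (auto simp: t_def K_def blaschke_bound_nonneg)
  moreover have "cmod (g z) \<le> E"
    using max z by (simp add: E_def)
  ultimately show ?thesis by (simp add: g_def t_def K_def)
qed

lemma norm_taylor_coeff_defect_le:
  fixes f :: "complex \<Rightarrow> complex" and p :: "complex poly"
  assumes r: "0 < r" "r < R" and U: "open U" "cball 0 R \<subseteq> U" and f: "f holomorphic_on U"
    and f_le: "\<And>w. cmod w \<le> R \<Longrightarrow> cmod (f w) \<le> B" and c: "cmod c \<le> A"
    and deg: "degree p \<le> n"
    and zeros: "zeros_at_least (\<lambda>z. poly [:-1, c:] z * f z - poly p z) (cball 0 r) (int m)"
    and small: "blaschke_bound r R ^ m * (real (Suc n) * (R / r) ^ n) \<le> 1/2"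
  shows "cmod (c * taylor_coeff f n - taylor_coeff f (Suc n))
           \<le> 4 * (blaschke_bound r R ^ m * (real (Suc n) * (R / r) ^ n)) * ((A * R + 1) * B)
               / r ^ Suc n"
proof -
  define g where "g = (\<lambda>z. poly [:-1, c:] z * f z - poly p z)"
  have g: "g holomorphic_on U"
    unfolding g_def using f by (intro holomorphic_intros)
  have "cmod (poly [:-1, c:] w * f w) \<le> (A * R + 1) * B" if w: "cmod w \<le> R" for w
  proof -
    have "cmod (c * w - 1) \<le> cmod c * cmod w + 1"
      using norm_triangle_ineq4[of "c * w" 1] by (simp add: norm_mult)
    also have "\<dots> \<le> A * R + 1"
      using w c order_trans[OF norm_ge_zero c] by (intro add_right_mono mult_mono) auto
    finally have "cmod (poly [:-1, c:] w) \<le> A * R + 1"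
      by (simp add: mult.commute)
    moreover have "0 \<le> B"
      using r by (intro order_trans[OF norm_ge_zero f_le[of 0]]) simp
    ultimately show ?thesis
      unfolding norm_mult using f_le[OF w]
      by (intro mult_mono) (auto intro: order_trans[OF norm_ge_zero])
  qed
  then have "cmod (g w) \<le> 4 * (blaschke_bound r R ^ m * (real (Suc n) * (R / r) ^ n))
      * ((A * R + 1) * B)" if "cmod w \<le> r" for w
    unfolding g_def using r U f deg zeros small that
    by (intro norm_diff_poly_le_of_zeros[of r R U]) (auto intro!: holomorphic_intros)
  moreover have "cball 0 r \<subseteq> U" using r U by auto
  ultimately have "cmod (taylor_coeff g (Suc n))
      \<le> 4 * (blaschke_bound r R ^ m * (real (Suc n) * (R / r) ^ n)) * ((A * R + 1) * B)
          / r ^ Suc n"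
    using g r by (intro norm_taylor_coeff_le)
      (auto intro: holomorphic_on_imp_continuous_on elim!: holomorphic_on_subset)
  moreover have "taylor_coeff g (Suc n) = c * taylor_coeff f n - taylor_coeff f (Suc n)"
    unfolding g_def using f U r deg by (intro taylor_coeff_Suc_linear_mult_minus_poly) auto
  ultimately show ?thesis by simp
qed

section \<open>Growth of the Taylor coefficients\<close>

lemma eventually_superlinear_pow_le_geometric:
  fixes \<delta> K \<epsilon> :: real and N :: "nat \<Rightarrow> int"
  assumes \<delta>: "0 \<le> \<delta>" "\<delta> < 1" and K: "0 \<le> K" and \<epsilon>: "0 < \<epsilon>"
    and N: "filterlim (\<lambda>n. real_of_int (N n) / real n) at_top sequentially"
  shows "\<forall>\<^sub>F n in sequentially. \<delta> ^ nat (N n) * (real (Suc n) * K ^ n) \<le> \<epsilon> ^ n"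
proof -
  have "(\<lambda>L. \<delta> ^ L * (2 * K)) \<longlonglongrightarrow> 0"
    using \<delta> by (simp add: LIMSEQ_power_zero tendsto_mult_left_zero)
  then have "\<forall>\<^sub>F L in sequentially. \<delta> ^ L * (2 * K) < \<epsilon>"
    using \<epsilon> by (rule order_tendstoD(2))
  then obtain L where L: "\<delta> ^ L * (2 * K) \<le> \<epsilon>"
    unfolding eventually_sequentially by (meson le_refl less_imp_le)
  have "\<forall>\<^sub>F n in sequentially. real L \<le> real_of_int (N n) / real n"
    using N unfolding filterlim_at_top by blast
  then show ?thesis
    using eventually_gt_at_top[of 0]
  proof eventually_elim
    case (elim n)
    then have "real (L * n) \<le> real_of_int (N n)"
      by (simp add: le_divide_eq)
    then have "L * n \<le> nat (N n)" by linarith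
    then have "\<delta> ^ nat (N n) \<le> (\<delta> ^ L) ^ n"
      unfolding power_mult[symmetric] using \<delta> by (intro power_decreasing) auto
    moreover have "real (Suc n) \<le> 2 ^ n"
      using Suc_leI[OF less_exp[of n]] of_nat_le_iff[of "Suc n" "2 ^ n", where 'a=real] by simp
    ultimately have "\<delta> ^ nat (N n) * (real (Suc n) * K ^ n) \<le> (\<delta> ^ L) ^ n * (2 ^ n * K ^ n)"
      using \<delta> K by (intro mult_mono) auto
    also have "\<dots> = (\<delta> ^ L * (2 * K)) ^ n"
      by (simp add: power_mult_distrib)
    also have "\<dots> \<le> \<epsilon> ^ n"
      using L \<delta> K by (intro power_mono) auto
    finally show ?case .
  qed
qed

lemma eventually_superlinear_defect_small:
  fixes \<delta> r R C d a :: real and N :: "nat \<Rightarrow> int"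
  assumes \<delta>: "0 \<le> \<delta>" "\<delta> < 1" and r: "0 < r" "r \<le> 1" "0 \<le> R"
    and pos: "0 \<le> C" "0 < d" "0 < a"
    and N: "filterlim (\<lambda>n. real_of_int (N n) / real n) at_top sequentially"
  shows "\<forall>\<^sub>F n in sequentially.
           \<delta> ^ nat (N n) * (real (Suc n) * (R / r) ^ n) \<le> 1/2 \<and>
           4 * (\<delta> ^ nat (N n) * (real (Suc n) * (R / r) ^ n)) * C / r ^ Suc n \<le> d * a ^ n"
proof -
  define \<epsilon> where "\<epsilon> = min a 1 / 2"
  have \<epsilon>: "0 < \<epsilon>" "\<epsilon> \<le> 1/2" "\<epsilon> \<le> a / 2"
    using pos by (auto simp: \<epsilon>_def)
  have "(\<lambda>n. 4 * C / r * (1/2) ^ n) \<longlonglongrightarrow> 0"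
    by (intro tendsto_mult_right_zero LIMSEQ_power_zero) simp
  then have "\<forall>\<^sub>F n in sequentially. 4 * C / r * (1/2) ^ n < d"
    using pos(2) by (rule order_tendstoD(2))
  moreover have "\<forall>\<^sub>F n in sequentially. \<delta> ^ nat (N n) * (real (Suc n) * (R / r\<^sup>2) ^ n) \<le> \<epsilon> ^ n"
    using \<delta> r \<epsilon> N by (intro eventually_superlinear_pow_le_geometric) auto
  ultimately show ?thesis
    using eventually_gt_at_top[of 0]
  proof eventually_elim
    case (elim n)
    define \<theta> where "\<theta> = \<delta> ^ nat (N n) * (real (Suc n) * (R / r) ^ n)"
    have "\<theta> / r ^ n = \<delta> ^ nat (N n) * (real (Suc n) * (R / r\<^sup>2) ^ n)"
      by (simp add: \<theta>_def power_divide power2_eq_square power_mult_distrib)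
    with elim have \<theta>: "\<theta> / r ^ n \<le> \<epsilon> ^ n" by simp
    have "\<theta> \<le> \<theta> / r ^ n"
      using r \<delta> by (simp add: \<theta>_def le_divide_eq power_le_one mult_left_le)
    also have "\<dots> \<le> \<epsilon> ^ 1"
      using order_trans[OF \<theta> power_decreasing[of 1 n \<epsilon>]] \<epsilon> elim by simp
    finally have half: "\<theta> \<le> 1/2" using \<epsilon> by simp
    have "4 * \<theta> * C / r ^ Suc n = 4 * C / r * (\<theta> / r ^ n)"
      by simp
    also have "\<dots> \<le> 4 * C / r * (1/2) ^ n * a ^ n"
    proof -
      have "\<theta> / r ^ n \<le> (1/2) ^ n * a ^ n"
        using order_trans[OF \<theta> power_mono[of \<epsilon> "a / 2" n]] \<epsilon>
        by (simp add: power_divide)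
      then have "4 * C / r * (\<theta> / r ^ n) \<le> 4 * C / r * ((1/2) ^ n * a ^ n)"
        using pos r by (intro mult_left_mono) auto
      then show ?thesis by (simp only: mult.assoc)
    qed
    also have "\<dots> \<le> d * a ^ n"
      using elim pos by (intro mult_right_mono) auto
    finally show ?case using half unfolding \<theta>_def by simp
  qed
qed

lemma eventually_taylor_coeff_recursion:
  fixes f :: "complex \<Rightarrow> complex" and N :: "nat \<Rightarrow> int" and P :: "nat \<Rightarrow> complex poly"
  assumes f: "f holomorphic_on ball 0 1" and r: "0 < r" "r < 1"
    and N: "filterlim (\<lambda>n. real_of_int (N n) / real n) at_top sequentially"
    and deg: "\<And>n. degree (P n) \<le> n"
    and a: "0 \<le> a0" "a0 < a"
  shows "\<forall>\<^sub>F n in sequentially. \<forall>c. cmod c \<le> a0 \<longrightarrow>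
           zeros_at_least (\<lambda>z. poly (Qpoly (Some c)) z * f z - poly (P n) z) (cball 0 r) (N n)
           \<longrightarrow>
           cmod (taylor_coeff f (Suc n)) \<le> a0 * cmod (taylor_coeff f n) + (a - a0) * a ^ n"
proof -
  define R where "R = (1 + r) / 2"
  have R: "r < R" "cball 0 R \<subseteq> ball 0 1" using r by (auto simp: R_def)
  have "compact (f ` cball 0 R)"
    using f R by (intro compact_continuous_image holomorphic_on_imp_continuous_on)
      (auto elim!: holomorphic_on_subset)
  then obtain B where B: "\<And>w. cmod w \<le> R \<Longrightarrow> cmod (f w) \<le> B"
    by (fastforce dest!: compact_imp_bounded simp: bounded_iff)
  have B0: "0 \<le> B"
    using r R by (intro order_trans[OF norm_ge_zero B[of 0]]) simp
  define \<delta> where "\<delta> = blaschke_bound r R"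
  have "\<forall>\<^sub>F n in sequentially. 0 \<le> real_of_int (N n) / real n"
    using N unfolding filterlim_at_top by blast
  then have "\<forall>\<^sub>F n in sequentially. 0 \<le> N n"
    using eventually_gt_at_top[of 0] by eventually_elim (simp add: zero_le_divide_iff)
  moreover have "\<forall>\<^sub>F n in sequentially.
      \<delta> ^ nat (N n) * (real (Suc n) * (R / r) ^ n) \<le> 1/2 \<and>
      4 * (\<delta> ^ nat (N n) * (real (Suc n) * (R / r) ^ n)) * ((a0 * R + 1) * B) / r ^ Suc n
        \<le> (a - a0) * a ^ n"
    unfolding \<delta>_def using r R a B0
    by (intro eventually_superlinear_defect_small blaschke_bound_nonneg blaschke_bound_less_1 N) auto
  ultimately show ?thesis
  proof eventually_elim
    case (elim n)
    show ?case
    proof (intro allI impI)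
      fix c :: complex
      assume c: "cmod c \<le> a0"
        and "zeros_at_least (\<lambda>z. poly (Qpoly (Some c)) z * f z - poly (P n) z) (cball 0 r) (N n)"
      then have zeros:
        "zeros_at_least (\<lambda>z. poly [:-1, c:] z * f z - poly (P n) z) (cball 0 r) (N n)"
        by (simp add: Qpoly_def)
      have "cmod (c * taylor_coeff f n - taylor_coeff f (Suc n))
          \<le> 4 * (\<delta> ^ nat (N n) * (real (Suc n) * (R / r) ^ n)) * ((a0 * R + 1) * B) / r ^ Suc n"
        unfolding \<delta>_def using r R f B c deg zeros elim
        by (intro norm_taylor_coeff_defect_le[of r R "ball 0 1"]) (auto simp: \<delta>_def)
      also have "\<dots> \<le> (a - a0) * a ^ n" using elim by simp
      finally have "cmod (c * taylor_coeff f n - taylor_coeff f (Suc n)) \<le> (a - a0) * a ^ n" .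
      moreover have "cmod (c * taylor_coeff f n) \<le> a0 * cmod (taylor_coeff f n)"
        using c by (simp add: norm_mult mult_right_mono)
      ultimately show "cmod (taylor_coeff f (Suc n)) \<le> a0 * cmod (taylor_coeff f n) + (a - a0) * a ^ n"
        using norm_triangle_ineq4[of "c * taylor_coeff f n"
            "c * taylor_coeff f n - taylor_coeff f (Suc n)"] by simp
    qed
  qed
qed

lemma eventually_norm_le_geometric:
  fixes x :: "nat \<Rightarrow> 'a::real_normed_vector"
  assumes a: "0 \<le> a0" "a0 < a"
    and rec: "\<forall>\<^sub>F n in sequentially. norm (x (Suc n)) \<le> a0 * norm (x n) + (a - a0) * a ^ n"
  shows "\<exists>D. \<forall>\<^sub>F n in sequentially. norm (x n) \<le> D * a ^ n"
proof -
  obtain n0 where n0: "\<And>n. n \<ge> n0 \<Longrightarrow> norm (x (Suc n)) \<le> a0 * norm (x n) + (a - a0) * a ^ n"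
    using rec unfolding eventually_sequentially by blast
  define D where "D = max 1 (norm (x n0) / a ^ n0)"
  have D: "1 \<le> D" "norm (x n0) \<le> D * a ^ n0"
    using a by (auto simp: D_def divide_le_eq max_def)
  have "norm (x (n0 + k)) \<le> D * a ^ (n0 + k)" for k
  proof (induction k)
    case (Suc k)
    have "norm (x (Suc (n0 + k))) \<le> a0 * norm (x (n0 + k)) + (a - a0) * a ^ (n0 + k)"
      by (rule n0) simp
    also have "\<dots> \<le> a0 * (D * a ^ (n0 + k)) + (a - a0) * (D * a ^ (n0 + k))"
      using Suc a D by (intro add_mono mult_left_mono) auto
    also have "\<dots> = D * a ^ (n0 + Suc k)"
      by (simp add: algebra_simps)
    finally show ?case by simp
  qed (use D in simp)
  then have "\<forall>n\<ge>n0. norm (x n) \<le> D * a ^ n"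
    by (metis le_add_diff_inverse)
  then show ?thesis
    unfolding eventually_sequentially by blast
qed

lemma conv_radius_ge_of_geometric_bound:
  fixes x :: "nat \<Rightarrow> 'a::{banach, real_normed_div_algebra}"
  assumes a: "0 < a" and bound: "\<forall>\<^sub>F n in sequentially. norm (x n) \<le> D * a ^ n"
  shows "ereal (1 / a) \<le> conv_radius x"
proof (rule conv_radius_geI_ex')
  fix s :: real
  assume s: "0 < s" "ereal s < ereal (1 / a)"
  then have "a * s < 1" using a by (simp add: field_simps)
  then have "summable (\<lambda>n. D * (a * s) ^ n)"
    using a s by (intro summable_mult summable_geometric) simp
  moreover have "\<forall>\<^sub>F n in sequentially. norm (x n * of_real s ^ n) \<le> D * (a * s) ^ n"
    using bound
  proof eventually_elim
    case (elim n)
    then have "norm (x n) * s ^ n \<le> D * a ^ n * s ^ n"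
      using s by (intro mult_right_mono) auto
    then show ?case
      using s by (simp add: norm_mult norm_power power_mult_distrib mult.assoc)
  qed
  ultimately show "summable (\<lambda>n. x n * of_real s ^ n)"
    by (rule summable_comparison_test_ev[rotated])
qed

theorem lemma3p3:
  fixes f :: "complex \<Rightarrow> complex" and r :: real
    and N :: "nat \<Rightarrow> int" and P :: "nat \<Rightarrow> complex poly" and \<alpha> :: "nat \<Rightarrow> complex option"
  assumes "f holomorphic_on ball 0 1"
    and "0 < r" and "r < 1"
    and "mono N"
    and "filterlim (\<lambda>n. real_of_int (N n) / real n) at_top sequentially"
    and "\<And>n. degree (P n) \<le> n"
    and "\<And>n. zeros_at_least (\<lambda>z. poly (Qpoly (\<alpha> n)) z * f z - poly (P n) z) (cball 0 r) (N n)"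
  shows "limsup (\<lambda>n. absalpha (\<alpha> n)) \<ge> inverse (conv_radius (taylor_coeff f))"
proof (rule ccontr)
  define \<rho> where "\<rho> = conv_radius (taylor_coeff f)"
  define L where "L = limsup (\<lambda>n. absalpha (\<alpha> n))"
  assume "\<not> ?thesis"
  then have "L < inverse \<rho>" by (simp add: L_def \<rho>_def)
  then obtain a0 where a0: "L < ereal a0" "ereal a0 < inverse \<rho>"
    using ereal_dense2 by blast
  then obtain a where "ereal a0 < ereal a" and a_lt: "ereal a < inverse \<rho>"
    using ereal_dense2 by blast
  then have a: "a0 < a" by simp
  have "0 \<le> L"
    unfolding L_def by (rule le_Limsup) (auto simp: absalpha_def split: option.split)
  with a0(1) have "0 \<le> a0"
    by (metis ereal_less_eq(5) order.strict_implies_order order.trans)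
  have "\<forall>\<^sub>F n in sequentially. absalpha (\<alpha> n) < ereal a0"
    using Limsup_lessD a0(1) unfolding L_def by blast
  then have "\<forall>\<^sub>F n in sequentially. \<exists>c. \<alpha> n = Some c \<and> cmod c \<le> a0"
    by (rule eventually_mono) (auto simp: absalpha_def split: option.splits)
  with eventually_taylor_coeff_recursion[OF assms(1-3,5,6) \<open>0 \<le> a0\<close> a]
  have "\<forall>\<^sub>F n in sequentially. cmod (taylor_coeff f (Suc n))
          \<le> a0 * cmod (taylor_coeff f n) + (a - a0) * a ^ n"
    by eventually_elim (metis assms(7))
  then obtain D where "\<forall>\<^sub>F n in sequentially. cmod (taylor_coeff f n) \<le> D * a ^ n"
    using eventually_norm_le_geometric \<open>0 \<le> a0\<close> a by blast
  then have "ereal (1 / a) \<le> \<rho>"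
    unfolding \<rho>_def using \<open>0 \<le> a0\<close> a by (intro conv_radius_ge_of_geometric_bound) auto
  then have "inverse \<rho> \<le> ereal a"
    using \<open>0 \<le> a0\<close> a ereal_inverse_antimono[of "ereal (1 / a)" \<rho>] by simp
  with a_lt show False by simp
qed

end
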